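(* Let $(A,* )$ be an involutive associative algebra, $(M,* )$ an involutive $A$-bimodule, and $T:M\to A$ a relative Rota-Baxter operator on $A$ with respect to $M$. Then $H^\bullet_T(M,A)\cong iH^\bullet_T(M,A)\oplus i_-H^\bullet_T(M,A)$, where these are the cohomologies of the complexes $(\mathrm{Hom}(M^{\otimes\bullet},A),d_T)$, $(i\mathrm{Hom}(M^{\otimes\bullet},A),d_T)$ and $(i_-\mathrm{Hom}(M^{\otimes\bullet},A),d_T)$ respectively.
   Context: An involutive associative algebra is an associative algebra $A$ with a linear map $*:A\to A$ satisfying $a^{**}=a$ and $(ab)^*=b^*a^*$; an involutive $A$-bimodule is an $A$-bimodule $M$ with $*:M\to M$, $u^{**}=u$, $(au)^*=u^*a^*$, $(ua)^*=a^*u^*$. A relative Rota-Baxter operator is a linear $T:M\to A$ with $T(u^* )=T(u)^*$ and $T(u)T(v)=T(uT(v)+T(u)v)$. Put $u\circledast v=uT(v)+T(u)v$, $l_T(u,a)=T(u)a-T(ua)$, $r_T(a,u)=aT(u)-T(au)$. Let $\mathrm{Hom}(M^{\otimes 0},A)=A$. The differential $d_T:\mathrm{Hom}(M^{\otimes n},A)\to \mathrm{Hom}(M^{\otimes n+1},A)$ is $d_T(a)(u)=l_T(u,a)-r_T(a,u)$ for $a\in A$, and for $n\ge1$, $(d_Tf)(u_1,\ldots,u_{n+1})=(-1)^n\big[l_T(u_1,f(u_2,\ldots,u_{n+1}))+\sum_{i=1}^n(-1)^if(u_1,\ldots,u_i\circledast u_{i+1},\ldots,u_{n+1})+(-1)^{n+1}r_T(f(u_1,\ldots,u_n),u_{n+1})\big]$;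 $H^\bullet_T(M,A)$ is its cohomology. Define $S_0(a)=-a^*$ and $(S_nf)(u_1,\ldots,u_n)=(-1)^{\frac{(n-1)(n-2)}{2}}f(u_n^*,\ldots,u_1^* )^*$ for $n\ge1$; then $S_n^2=\mathrm{id}$. Let $i\mathrm{Hom}(M^{\otimes n},A)$ and $i_-\mathrm{Hom}(M^{\otimes n},A)$ be the $+1$ and $-1$ eigenspaces of $S_n$ (so $i\mathrm{Hom}(M^{\otimes 0},A)=\{a\mid a^*=-a\}$). Both are subcomplexes for $d_T$; their cohomologies are $iH^\bullet_T(M,A)$ and $i_-H^\bullet_T(M,A)$. *)

theory Defs
  imports Main "HOL.Vector_Spaces"
begin

text \<open>The algebra A is a type 'a of class ring
 (associative, not necessarily unital) with a k-vector space structure sA making the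
 product bilinear.\<close>

definition inv_assoc_algebra ::
  "('k::field \<Rightarrow> 'a::ring \<Rightarrow> 'a) \<Rightarrow> ('a \<Rightarrow> 'a) \<Rightarrow> bool" where
  "inv_assoc_algebra sA starA \<longleftrightarrow>
     vector_space sA \<and>
     (\<forall>c x y. sA c (x * y) = sA c x * y \<and> sA c (x * y) = x * sA c y) \<and>
     Vector_Spaces.linear sA sA starA \<and>
     (\<forall>x. starA (starA x) = x) \<and>
     (\<forall>x y. starA (x * y) = starA y * starA x)"

definition inv_bimodule ::
  "('k::field \<Rightarrow> 'a::ring \<Rightarrow> 'a) \<Rightarrow> ('k \<Rightarrow> 'm::ab_group_add \<Rightarrow> 'm) \<Rightarrow>
   ('a \<Rightarrow> 'm \<Rightarrow> 'm) \<Rightarrow> ('m \<Rightarrow> 'a \<Rightarrow> 'm) \<Rightarrow> ('a \<Rightarrow> 'a) \<Rightarrow> ('m \<Rightarrow> 'm) \<Rightarrow> bool" where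
  "inv_bimodule sA sM la ra starA starM \<longleftrightarrow>
     vector_space sM \<and>
     (\<forall>a b u. la (a + b) u = la a u + la b u) \<and>
     (\<forall>a u v. la a (u + v) = la a u + la a v) \<and>
     (\<forall>c a u. la (sA c a) u = sM c (la a u) \<and> la a (sM c u) = sM c (la a u)) \<and>
     (\<forall>a b u. ra u (a + b) = ra u a + ra u b) \<and>
     (\<forall>a u v. ra (u + v) a = ra u a + ra v a) \<and>
     (\<forall>c a u. ra u (sA c a) = sM c (ra u a) \<and> ra (sM c u) a = sM c (ra u a)) \<and>
     (\<forall>a b u. la (a * b) u = la a (la b u)) \<and>
     (\<forall>a b u. ra u (a * b) = ra (ra u a) b) \<and>
     (\<forall>a b u. la a (ra u b) = ra (la a u) b) \<and>
     Vector_Spaces.linear sM sM starM \<and>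
     (\<forall>u. starM (starM u) = u) \<and>
     (\<forall>a u. starM (la a u) = ra (starM u) (starA a)) \<and>
     (\<forall>a u. starM (ra u a) = la (starA a) (starM u))"

definition rel_RB ::
  "('k::field \<Rightarrow> 'a::ring \<Rightarrow> 'a) \<Rightarrow> ('k \<Rightarrow> 'm::ab_group_add \<Rightarrow> 'm) \<Rightarrow>
   ('a \<Rightarrow> 'm \<Rightarrow> 'm) \<Rightarrow> ('m \<Rightarrow> 'a \<Rightarrow> 'm) \<Rightarrow> ('a \<Rightarrow> 'a) \<Rightarrow> ('m \<Rightarrow> 'm) \<Rightarrow>
   ('m \<Rightarrow> 'a) \<Rightarrow> bool" where
  "rel_RB sA sM la ra starA starM T \<longleftrightarrow>
     Vector_Spaces.linear sM sA T \<and>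
     (\<forall>u. T (starM u) = starA (T u)) \<and>
     (\<forall>u v. T u * T v = T (ra u (T v) + la (T u) v))"

text \<open>An n-cochain in Hom(M^{\<otimes>n},A) is represented as a function on lists of elements
 of M which is k-multilinear on lists of length n and zero on lists of other lengths.
 For n = 0 this is a function determined by its value on [], i.e. an element of A.\<close>

definition multilin ::
  "('k::field \<Rightarrow> 'a::ring \<Rightarrow> 'a) \<Rightarrow> ('k \<Rightarrow> 'm::ab_group_add \<Rightarrow> 'm) \<Rightarrow> nat \<Rightarrow> ('m list \<Rightarrow> 'a) \<Rightarrow> bool" where
  "multilin sA sM n f \<longleftrightarrow>
     (\<forall>us. length us \<noteq> n \<longrightarrow> f us = 0) \<and>
     (\<forall>us i u v c. length us = n \<and> i < n \<longrightarrow>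
        f (us[i := u + v]) = f (us[i := u]) + f (us[i := v]) \<and>
        f (us[i := sM c u]) = sA c (f (us[i := u])))"

definition cochains where
  "cochains sA sM n = {f. multilin sA sM n f}"

definition sgn_if :: "nat \<Rightarrow> 'a::ring \<Rightarrow> 'a" where
  "sgn_if k x = (if even k then x else - x)"

definition circT :: "('a::ring \<Rightarrow> 'm \<Rightarrow> 'm::ab_group_add) \<Rightarrow> ('m \<Rightarrow> 'a \<Rightarrow> 'm) \<Rightarrow> ('m \<Rightarrow> 'a) \<Rightarrow> 'm \<Rightarrow> 'm \<Rightarrow> 'm" where
  "circT la ra T u v = ra u (T v) + la (T u) v"

definition lT where "lT ra T u a = T u * a - T (ra u a)"
definition rT where "rT la T a u = a * T u - T (la a u)"

text \<open>merge i us (1 \<le> i \<le> n) replaces u_i, u_{i+1} by u_i \<circledast> u_{i+1} (1-based).\<close>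
definition merge_at where
  "merge_at la ra T i us = take (i - 1) us @ [circT la ra T (us ! (i - 1)) (us ! i)] @ drop (i + 1) us"

definition dT ::
  "('a::ring \<Rightarrow> 'm \<Rightarrow> 'm::ab_group_add) \<Rightarrow> ('m \<Rightarrow> 'a \<Rightarrow> 'm) \<Rightarrow> ('m \<Rightarrow> 'a) \<Rightarrow> nat \<Rightarrow>
   ('m list \<Rightarrow> 'a) \<Rightarrow> ('m list \<Rightarrow> 'a)" where
  "dT la ra T n f = (\<lambda>us.
     if length us \<noteq> n + 1 then 0
     else if n = 0 then lT ra T (us ! 0) (f []) - rT la T (f []) (us ! 0)
     else sgn_if n
       (lT ra T (us ! 0) (f (tl us))
        + (\<Sum>i = 1..n. sgn_if i (f (merge_at la ra T i us)))
        + sgn_if (n + 1) (rT la T (f (take n us)) (us ! n))))"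

definition S_op :: "('a \<Rightarrow> 'a::ring) \<Rightarrow> ('m \<Rightarrow> 'm) \<Rightarrow> nat \<Rightarrow> ('m list \<Rightarrow> 'a) \<Rightarrow> ('m list \<Rightarrow> 'a)" where
  "S_op starA starM n f = (\<lambda>us.
     if length us \<noteq> n then 0
     else if n = 0 then - starA (f [])
     else sgn_if (((n - 1) * (n - 2)) div 2) (starA (f (rev (map starM us)))))"

definition icochains where
  "icochains sA sM starA starM n = {f \<in> cochains sA sM n. S_op starA starM n f = f}"

definition imcochains where
  "imcochains sA sM starA starM n = {f \<in> cochains sA sM n. S_op starA starM n f = (\<lambda>us. - f us)}"

definition cocycles where
  "cocycles la ra T C n = {f \<in> C n. dT la ra T n f = (\<lambda>_. 0)}"

definition coboundaries where
  "coboundaries la ra T C n = (if n = 0 then {\<lambda>_. 0} else dT la ra T (n - 1) ` C (n - 1))"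

definition fadd :: "('m list \<Rightarrow> 'a::ring) \<Rightarrow> ('m list \<Rightarrow> 'a) \<Rightarrow> 'm list \<Rightarrow> 'a" where
  "fadd f g = (\<lambda>us. f us + g us)"

definition fscale where
  "fscale sA c f = (\<lambda>us. sA c (f us))"

definition coset where
  "coset B f = {fadd f b | b. b \<in> B}"

definition quot where
  "quot Z B = coset B ` Z"

definition qadd where
  "qadd X Y = {fadd x y | x y. x \<in> X \<and> y \<in> Y}"

definition qscale where
  "qscale sA B c X = {fadd (fscale sA c x) b | x b. x \<in> X \<and> b \<in> B}"

definition quot_iso_sum where
  "quot_iso_sum sA Z B Z1 B1 Z2 B2 \<longleftrightarrow>
     (\<exists>\<Psi>. bij_betw \<Psi> (quot Z1 B1 \<times> quot Z2 B2) (quot Z B) \<and>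
       (\<forall>X\<in>quot Z1 B1. \<forall>Y\<in>quot Z2 B2. \<forall>X'\<in>quot Z1 B1. \<forall>Y'\<in>quot Z2 B2.
          \<Psi> (qadd X X', qadd Y Y') = qadd (\<Psi> (X, Y)) (\<Psi> (X', Y'))) \<and>
       (\<forall>X\<in>quot Z1 B1. \<forall>Y\<in>quot Z2 B2. \<forall>c.
          \<Psi> (qscale sA B1 c X, qscale sA B2 c Y) = qscale sA B c (\<Psi> (X, Y))))"

end

theory Submission
  imports Defs "HOL-Library.Function_Algebras" "HOL-Library.Set_Algebras"
begin

(* Since 2 is invertible, S_n splits every cochain as f = (f + S f)/2 + (f - S f)/2 into its
   +1 and -1 eigenparts. The operator S is compatible with d_T, i.e. S_{n+1} (d_T f) = d_T (S_n f):
   the involution reverses the arguments and the product, exchanging l_T and r_T, and the sign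
   (-1)^((n-1)(n-2)/2) absorbs the resulting reversal of the alternating sum. Hence the splitting
   restricts to cocycles and to coboundaries, and the quotient of cocycles by coboundaries is the
   direct sum of the quotients of the eigenparts. *)

section \<open>Eigenspaces of a linear involution\<close>

context module
begin

lemma coset_eq_iff:
  assumes B: "subspace B"
  shows "x +o B = y +o B \<longleftrightarrow> x - y \<in> B"
proof -
  have sub: "x +o B \<subseteq> y +o B" if "x - y \<in> B" for x y
  proof
    fix z assume "z \<in> x +o B"
    then obtain b where "b \<in> B" "z = x + b" by (auto simp: elt_set_plus_def)
    then have "z - y \<in> B"
      using subspace_add[OF B \<open>b \<in> B\<close> that] by (simp add: add_diff_eq add.commute)
    then show "z \<in> y +o B" by (rule set_minus_imp_plus)
  qed
  have "x \<in> x +o B" using set_plus_intro2[OF subspace_0[OF B], of x] by simp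
  then show ?thesis
    using sub[of x y] sub[of y x] subspace_neg[OF B, of "x - y"] set_plus_imp_minus by auto
qed

lemma scale_image_set_plus: "(\<lambda>x. c *s x) ` (X + Y) = (\<lambda>x. c *s x) ` X + (\<lambda>x. c *s x) ` Y"
  by (force simp: set_plus_image image_image scale_right_distrib)

end

lemma (in vector_space) subspace_set_plus:
  assumes "subspace S" and "subspace T"
  shows "subspace (S + T)"
proof -
  have "S + T = {x + y |x y. x \<in> S \<and> y \<in> T}" by (auto simp: set_plus_def)
  then show ?thesis using subspace_sums[OF assms] by simp
qed

lemma scale_half_double:
  fixes s :: "'k::field_char_0 \<Rightarrow> 'v::ab_group_add \<Rightarrow> 'v"
  assumes "vector_space s"
  shows "s (1/2) (x + x) = x"
proof -
  interpret vector_space s by fact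
  have "s (1/2) (x + x) = s (1/2 + 1/2) x" by (simp only: scale_left_distrib scale_right_distrib)
  then show ?thesis by simp
qed

lemma self_neg_eq_zero:
  fixes s :: "'k::field_char_0 \<Rightarrow> 'v::ab_group_add \<Rightarrow> 'v" and x :: 'v
  assumes "vector_space s" and "x = - x"
  shows "x = 0"
proof -
  interpret vector_space s by fact
  have "x + x = 0" using assms(2) by (metis add.right_inverse)
  then show ?thesis using scale_half_double[OF assms(1), of x] by simp
qed

lemma eigenspace_decomposition:
  fixes s :: "'k::field_char_0 \<Rightarrow> 'v::ab_group_add \<Rightarrow> 'v"
  assumes S: "Vector_Spaces.linear s s S"
    and V: "module.subspace s V" "S ` V \<subseteq> V" "\<And>v. v \<in> V \<Longrightarrow> S (S v) = v"
  shows "V = {v \<in> V. S v = v} + {v \<in> V. S v = - v}"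
proof -
  interpret linear s s S by (rule S)
  have "v \<in> {v \<in> V. S v = v} + {v \<in> V. S v = - v}" if v: "v \<in> V" for v
  proof -
    define p where "p = s (1/2) (v + S v)"
    define q where "q = s (1/2) (v - S v)"
    have "p \<in> V" "q \<in> V"
      using v V(1,2) by (auto simp: p_def q_def vs1.subspace_add vs1.subspace_diff vs1.subspace_scale)
    moreover have "S p = p" "S q = - q"
      using V(3)[OF v] by (simp_all add: p_def q_def add diff scale add.commute flip: vs1.scale_minus_right)
    moreover have "v = p + q"
      using scale_half_double[OF vs1.vector_space_axioms, of v]
      by (simp add: p_def q_def flip: vs1.scale_right_distrib)
    ultimately show ?thesis by blast
  qed
  moreover have "{v \<in> V. S v = v} + {v \<in> V. S v = - v} \<subseteq> V"
    using V(1) by (auto elim!: set_plus_elim intro: vs1.subspace_add)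
  ultimately show ?thesis by blast
qed

lemma linear_image_eigenspaces:
  fixes s1 :: "'k::field_char_0 \<Rightarrow> 'v::ab_group_add \<Rightarrow> 'v"
    and s2 :: "'k \<Rightarrow> 'w::ab_group_add \<Rightarrow> 'w"
  assumes d: "Vector_Spaces.linear s1 s2 d" and S: "Vector_Spaces.linear s1 s1 S"
    and V: "module.subspace s1 V" "S ` V \<subseteq> V" "\<And>v. v \<in> V \<Longrightarrow> S (S v) = v"
    and comm: "\<And>v. v \<in> V \<Longrightarrow> d (S v) = S' (d v)"
  shows "d ` {v \<in> V. S v = v} = {w \<in> d ` V. S' w = w}"
    and "d ` {v \<in> V. S v = - v} = {w \<in> d ` V. S' w = - w}"
proof -
  interpret d: linear s1 s2 d by (rule d)
  interpret S: linear s1 s1 S by (rule S)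
  have split: "\<exists>v1 v2. v1 \<in> V \<and> S v1 = v1 \<and> v2 \<in> V \<and> S v2 = - v2 \<and> v = v1 + v2 \<and>
      S' (d v) = d v1 - d v2" if "v \<in> V" for v
  proof -
    have "v \<in> {v \<in> V. S v = v} + {v \<in> V. S v = - v}"
      using that eigenspace_decomposition[OF S V] by simp
    then obtain v1 v2 where v: "v1 \<in> V" "S v1 = v1" "v2 \<in> V" "S v2 = - v2" "v = v1 + v2"
      by (auto elim!: set_plus_elim)
    then have "S' (d v) = d v1 - d v2"
      using comm[OF that] by (simp add: S.add d.add d.diff flip: diff_conv_add_uminus)
    with v show ?thesis by blast
  qed
  show "d ` {v \<in> V. S v = v} = {w \<in> d ` V. S' w = w}"
  proof (intro antisym subsetI)
    fix w assume "w \<in> {w \<in> d ` V. S' w = w}"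
    then obtain v where v: "v \<in> V" "w = d v" "S' w = w" by blast
    then obtain v1 v2 where "v1 \<in> V" "S v1 = v1" "v2 \<in> V" "S v2 = - v2" "v = v1 + v2"
        "d v1 - d v2 = d v1 + d v2"
      using split[of v] by (auto simp: d.add)
    moreover have "d v2 = 0"
      using self_neg_eq_zero[OF d.vs2.vector_space_axioms, of "d v2"] \<open>d v1 - d v2 = d v1 + d v2\<close>
      by (metis add_left_cancel diff_conv_add_uminus)
    ultimately show "w \<in> d ` {v \<in> V. S v = v}" using v by (auto simp: d.add)
  qed (auto simp flip: comm)
  show "d ` {v \<in> V. S v = - v} = {w \<in> d ` V. S' w = - w}"
  proof (intro antisym subsetI)
    fix w assume "w \<in> {w \<in> d ` V. S' w = - w}"
    then obtain v where v: "v \<in> V" "w = d v" "S' w = - w" by blast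
    then obtain v1 v2 where "v1 \<in> V" "S v1 = v1" "v2 \<in> V" "S v2 = - v2" "v = v1 + v2"
        "d v1 - d v2 = - (d v1 + d v2)"
      using split[of v] by (auto simp: d.add)
    moreover have "d v1 = 0"
      using self_neg_eq_zero[OF d.vs2.vector_space_axioms, of "d v1"] \<open>d v1 - d v2 = - (d v1 + d v2)\<close>
      by (metis add_diff_cancel_right' add_uminus_conv_diff minus_add_distrib)
    ultimately show "w \<in> d ` {v \<in> V. S v = - v}" using v by (auto simp: d.add)
  qed (auto simp: d.neg simp flip: comm)
qed

section \<open>Quotients of spaces of cochains\<close>

lemma fadd_eq_plus: "fadd f g = f + g"
  by (simp add: fadd_def plus_fun_def)

lemma quot_eq_image: "quot Z B = (\<lambda>z. z +o B) ` Z"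
  unfolding quot_def coset_def elt_set_plus_def fadd_eq_plus by blast

lemma qadd_eq_plus: "qadd X Y = X + Y"
  unfolding qadd_def set_plus_def fadd_eq_plus by blast

lemma qscale_eq_plus: "qscale sA B c X = fscale sA c ` X + B"
  unfolding qscale_def set_plus_def fadd_eq_plus by blast

lemma cocycles_eq: "cocycles la ra T C n = {f \<in> C n. dT la ra T n f = 0}"
  by (simp add: cocycles_def zero_fun_def)

lemma coboundaries_0: "coboundaries la ra T C 0 = {0}"
  by (simp add: coboundaries_def zero_fun_def)

lemma coboundaries_Suc: "coboundaries la ra T C (Suc n) = dT la ra T n ` C n"
  by (simp add: coboundaries_def)

lemma imcochains_eq:
  "imcochains sA sM starA starM n = {f \<in> cochains sA sM n. S_op starA starM n f = - f}"
  by (simp add: imcochains_def fun_Compl_def)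

lemma vector_space_fscale: "vector_space s \<Longrightarrow> vector_space (fscale s)"
  unfolding vector_space_def fscale_def by (simp add: fun_eq_iff)

(* B1 \<subseteq> Z1 and B2 \<subseteq> Z2 are not assumed. *)
lemma quot_iso_sum_if_independent:
  fixes sA :: "'k::field \<Rightarrow> 'a::ring \<Rightarrow> 'a" and Z1 Z2 B1 B2 :: "('m list \<Rightarrow> 'a) set"
  assumes vs: "vector_space sA"
    and sub: "module.subspace (fscale sA) Z1" "module.subspace (fscale sA) Z2"
      "module.subspace (fscale sA) B1" "module.subspace (fscale sA) B2"
    and indep: "(Z1 + B1) \<inter> (Z2 + B2) = {0}"
  shows "quot_iso_sum sA (Z1 + Z2) (B1 + B2) Z1 B1 Z2 B2"
proof -
  interpret F: vector_space "fscale sA :: 'k \<Rightarrow> ('m list \<Rightarrow> 'a) \<Rightarrow> _"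
    by (rule vector_space_fscale[OF vs])
  define \<Psi> where "\<Psi> = (\<lambda>(X, Y). X + Y :: ('m list \<Rightarrow> 'a) set)"
  have \<Psi>_coset: "\<Psi> (z1 +o B1, z2 +o B2) = (z1 + z2) +o (B1 + B2)" for z1 z2
    by (simp add: \<Psi>_def set_plus_rearrange)
  have inj: "inj_on \<Psi> (quot Z1 B1 \<times> quot Z2 B2)"
  proof (rule inj_onI, clarsimp simp: quot_eq_image)
    fix z1 z2 z1' z2'
    assume z: "z1 \<in> Z1" "z2 \<in> Z2" "z1' \<in> Z1" "z2' \<in> Z2"
      and "\<Psi> (z1 +o B1, z2 +o B2) = \<Psi> (z1' +o B1, z2' +o B2)"
    then have "(z1 + z2) - (z1' + z2') \<in> B1 + B2"
      using F.coset_eq_iff[OF F.subspace_set_plus[OF sub(3,4)]] by (simp add: \<Psi>_coset)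
    then obtain b1 b2 where b: "b1 \<in> B1" "b2 \<in> B2" "(z1 + z2) - (z1' + z2') = b1 + b2"
      by (auto elim: set_plus_elim)
    define w where "w = (z1 - z1') - b1"
    have "(z1 - z1') + - b1 \<in> Z1 + B1"
      using z b sub by (intro set_plus_intro F.subspace_diff F.subspace_neg)
    moreover have "(z2' - z2) + b2 \<in> Z2 + B2"
      using z b sub by (intro set_plus_intro F.subspace_diff)
    moreover have "w = (z1 - z1') + - b1" "w = (z2' - z2) + b2"
      using b(3) by (simp_all add: w_def algebra_simps)
    ultimately have "w \<in> (Z1 + B1) \<inter> (Z2 + B2)" by simp
    then have "w = 0" using indep by simp
    then have "z1 - z1' \<in> B1" "z2 - z2' \<in> B2" using b by (auto simp: w_def algebra_simps)
    then show "z1 +o B1 = z1' +o B1 \<and> z2 +o B2 = z2' +o B2"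
      using F.coset_eq_iff[OF sub(3)] F.coset_eq_iff[OF sub(4)] by simp
  qed
  have onto: "\<Psi> ` (quot Z1 B1 \<times> quot Z2 B2) = quot (Z1 + Z2) (B1 + B2)"
  proof (intro equalityI subsetI)
    fix X assume "X \<in> \<Psi> ` (quot Z1 B1 \<times> quot Z2 B2)"
    then obtain z1 z2 where "z1 \<in> Z1" "z2 \<in> Z2" "X = (z1 + z2) +o (B1 + B2)"
      by (auto simp: quot_eq_image \<Psi>_coset)
    then show "X \<in> quot (Z1 + Z2) (B1 + B2)" by (auto simp: quot_eq_image)
  next
    fix X assume "X \<in> quot (Z1 + Z2) (B1 + B2)"
    then obtain z1 z2 where "z1 \<in> Z1" "z2 \<in> Z2" "X = (z1 + z2) +o (B1 + B2)"
      by (auto simp: quot_eq_image elim!: set_plus_elim)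
    then have "X = \<Psi> (z1 +o B1, z2 +o B2)" "(z1 +o B1, z2 +o B2) \<in> quot Z1 B1 \<times> quot Z2 B2"
      by (simp_all add: \<Psi>_coset quot_eq_image)
    then show "X \<in> \<Psi> ` (quot Z1 B1 \<times> quot Z2 B2)" by (metis image_eqI)
  qed
  have add: "\<Psi> (qadd X X', qadd Y Y') = qadd (\<Psi> (X, Y)) (\<Psi> (X', Y'))" for X X' Y Y'
    by (simp add: \<Psi>_def qadd_eq_plus ac_simps)
  have scale: "\<Psi> (qscale sA B1 c X, qscale sA B2 c Y) = qscale sA (B1 + B2) c (\<Psi> (X, Y))" for c X Y
    by (simp add: \<Psi>_def qscale_eq_plus F.scale_image_set_plus ac_simps)
  have "bij_betw \<Psi> (quot Z1 B1 \<times> quot Z2 B2) (quot (Z1 + Z2) (B1 + B2))"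
    using inj onto by (simp add: bij_betw_def)
  then show ?thesis
    unfolding quot_iso_sum_def by (intro exI[of _ \<Psi>] conjI ballI allI add scale)
qed

lemma quot_iso_sum_eigenspaces:
  fixes sA :: "'k::field_char_0 \<Rightarrow> 'a::ring \<Rightarrow> 'a" and Z B :: "('m list \<Rightarrow> 'a) set"
  assumes vs: "vector_space sA" and S: "Vector_Spaces.linear (fscale sA) (fscale sA) S"
    and Z: "module.subspace (fscale sA) Z" "S ` Z \<subseteq> Z" "\<And>z. z \<in> Z \<Longrightarrow> S (S z) = z"
    and B: "module.subspace (fscale sA) B" "S ` B \<subseteq> B" "\<And>b. b \<in> B \<Longrightarrow> S (S b) = b"
  shows "quot_iso_sum sA Z B {z \<in> Z. S z = z} {b \<in> B. S b = b} {z \<in> Z. S z = - z} {b \<in> B. S b = - b}"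
proof -
  interpret F: vector_space "fscale sA :: 'k \<Rightarrow> ('m list \<Rightarrow> 'a) \<Rightarrow> _"
    by (rule vector_space_fscale[OF vs])
  interpret S: linear "fscale sA" "fscale sA" S by (rule S)
  have eigen_subspace: "F.subspace {v \<in> V. S v = v}" "F.subspace {v \<in> V. S v = - v}"
    if "F.subspace V" for V
    using that by (auto simp: F.subspace_def S.add S.scale F.scale_minus_right)
  let ?P = "{z \<in> Z. S z = z} + {b \<in> B. S b = b}" and ?N = "{z \<in> Z. S z = - z} + {b \<in> B. S b = - b}"
  have "x = 0" if "x \<in> ?P \<inter> ?N" for x
  proof (rule self_neg_eq_zero[OF F.vector_space_axioms])
    have "S x = x" using IntD1[OF that] by (auto simp: S.add elim!: set_plus_elim)
    moreover have "S x = - x" using IntD2[OF that] by (auto simp: S.add elim!: set_plus_elim)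
    ultimately show "x = - x" by simp
  qed
  moreover have "0 + 0 \<in> ?P" "0 + 0 \<in> ?N"
    using F.subspace_0[OF Z(1)] F.subspace_0[OF B(1)] by (intro set_plus_intro; simp)+
  ultimately have "?P \<inter> ?N = {0}" by auto
  with quot_iso_sum_if_independent[OF vs eigen_subspace[OF Z(1)] eigen_subspace[OF B(1)]]
  show ?thesis
    by (simp flip: eigenspace_decomposition[OF S Z] eigenspace_decomposition[OF S B])
qed

section \<open>The involution S commutes with d_T\<close>

lemma sgn_if_commute:
  assumes "\<And>x. f (- x) = - f x"
  shows "f (sgn_if k x) = sgn_if k (f x)"
  using assms by (simp add: sgn_if_def)

lemma sgn_if_add: "sgn_if k (x + y) = sgn_if k x + sgn_if k (y::'a::ring)"
  by (simp add: sgn_if_def)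

lemma sgn_if_sgn_if: "sgn_if j (sgn_if k (x::'a::ring)) = sgn_if (j + k) x"
  by (simp add: sgn_if_def)

lemma sgn_if_double: "sgn_if (k + k) (x::'a::ring) = x"
  by (simp add: sgn_if_def)

lemma sgn_if_sum: "sgn_if k (sum g A) = (\<Sum>i\<in>A. sgn_if k (g i :: 'a::ring))"
  by (simp add: sgn_if_def sum_negf)

lemma sum_sgn_if_reflect:
  "(\<Sum>i = 1..n. sgn_if i (X (Suc n - i))) = sgn_if (Suc n) (\<Sum>j = 1..n. sgn_if j (X j :: 'a::ring))"
proof -
  have "(\<Sum>i = 1..n. sgn_if i (X (Suc n - i))) = (\<Sum>j = 1..n. sgn_if (Suc n - j) (X j))"
    by (rule sum.reindex_bij_witness[of _ "\<lambda>j. Suc n - j" "\<lambda>i. Suc n - i"]) auto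
  also have "\<dots> = (\<Sum>j = 1..n. sgn_if (Suc n) (sgn_if j (X j)))"
    by (rule sum.cong) (auto simp: sgn_if_def)
  finally show ?thesis by (simp add: sgn_if_sum)
qed

lemma triangular_number_step: "(n::nat) * (n - 1) div 2 = (n - 1) * (n - 2) div 2 + (n - 1)"
proof (cases n)
  case (Suc m)
  have "Suc m * m = m * (m - 1) + 2 * m" by (cases m) simp_all
  then show ?thesis using Suc by simp
qed simp

(* The Rota-Baxter identity is not assumed: it makes d_T a differential, which the splitting
   never uses. *)
locale involutive_linear_map =
  fixes sA :: "'k::field_char_0 \<Rightarrow> 'a::ring \<Rightarrow> 'a"
    and sM :: "'k \<Rightarrow> 'm::ab_group_add \<Rightarrow> 'm"
    and la :: "'a \<Rightarrow> 'm \<Rightarrow> 'm" and ra :: "'m \<Rightarrow> 'a \<Rightarrow> 'm"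
    and starA :: "'a \<Rightarrow> 'a" and starM :: "'m \<Rightarrow> 'm"
    and T :: "'m \<Rightarrow> 'a"
  assumes algebra: "inv_assoc_algebra sA starA"
    and bimodule: "inv_bimodule sA sM la ra starA starM"
    and T_linear: "Vector_Spaces.linear sM sA T"
    and T_star: "T (starM u) = starA (T u)"
begin

sublocale A: vector_space sA
  using algebra by (simp add: inv_assoc_algebra_def)

sublocale F: vector_space "fscale sA :: 'k \<Rightarrow> ('m list \<Rightarrow> 'a) \<Rightarrow> _"
  by (rule vector_space_fscale) (rule A.vector_space_axioms)

sublocale star_A: Vector_Spaces.linear sA sA starA
  using algebra by (simp add: inv_assoc_algebra_def)

sublocale star_M: Vector_Spaces.linear sM sM starM
  using bimodule by (simp add: inv_bimodule_def)

sublocale T: Vector_Spaces.linear sM sA T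
  by (rule T_linear)

lemma starA_starA [simp]: "starA (starA x) = x"
  using algebra by (simp add: inv_assoc_algebra_def)

lemma starA_mult: "starA (x * y) = starA y * starA x"
  using algebra by (simp add: inv_assoc_algebra_def)

lemma scale_mult_left: "sA c (x * y) = sA c x * y"
  using algebra unfolding inv_assoc_algebra_def by meson

lemma scale_mult_right: "sA c (x * y) = x * sA c y"
  using algebra unfolding inv_assoc_algebra_def by meson

lemma starM_starM [simp]: "starM (starM u) = u"
  using bimodule by (simp add: inv_bimodule_def)

lemma starM_la: "starM (la a u) = ra (starM u) (starA a)"
  using bimodule by (simp add: inv_bimodule_def)

lemma starM_ra: "starM (ra u a) = la (starA a) (starM u)"
  using bimodule by (simp add: inv_bimodule_def)

lemma la_add: "la (a + b) u = la a u + la b u"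
  using bimodule unfolding inv_bimodule_def by meson

lemma la_scale: "la (sA c a) u = sM c (la a u)"
  using bimodule unfolding inv_bimodule_def by meson

lemma ra_add: "ra u (a + b) = ra u a + ra u b"
  using bimodule unfolding inv_bimodule_def by meson

lemma ra_scale: "ra u (sA c a) = sM c (ra u a)"
  using bimodule unfolding inv_bimodule_def by meson

lemma lT_linear: "Vector_Spaces.linear sA sA (lT ra T u)"
  unfolding Vector_Spaces.linear_iff lT_def
  by (simp add: A.vector_space_axioms ra_add ra_scale T.add T.scale A.scale_right_diff_distrib
      distrib_left flip: scale_mult_right)

lemma rT_linear: "Vector_Spaces.linear sA sA (\<lambda>a. rT la T a u)"
  unfolding Vector_Spaces.linear_iff rT_def
  by (simp add: A.vector_space_axioms la_add la_scale T.add T.scale A.scale_right_diff_distrib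
      distrib_right flip: scale_mult_left)

lemma starA_lT: "starA (lT ra T u a) = rT la T (starA a) (starM u)"
  by (simp add: lT_def rT_def star_A.diff starA_mult starM_ra flip: T_star)

lemma starA_rT: "starA (rT la T a u) = lT ra T (starM u) (starA a)"
  by (simp add: lT_def rT_def star_A.diff starA_mult starM_la flip: T_star)

lemma starM_circT: "starM (circT la ra T u v) = circT la ra T (starM v) (starM u)"
  by (simp add: circT_def star_M.add starM_la starM_ra add.commute flip: T_star)

lemma starA_sgn_if: "starA (sgn_if k x) = sgn_if k (starA x)"
  by (rule sgn_if_commute) (rule star_A.neg)

lemma lT_neg: "lT ra T u (- a) = - lT ra T u a"
proof -
  interpret Vector_Spaces.linear sA sA "lT ra T u" by (rule lT_linear)
  show ?thesis by (rule neg)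
qed

lemma rT_neg: "rT la T (- a) u = - rT la T a u"
proof -
  interpret Vector_Spaces.linear sA sA "\<lambda>a. rT la T a u" by (rule rT_linear)
  show ?thesis using neg by simp
qed

lemma lT_sgn_if: "lT ra T u (sgn_if k a) = sgn_if k (lT ra T u a)"
  by (rule sgn_if_commute) (rule lT_neg)

lemma rT_sgn_if: "rT la T (sgn_if k a) u = sgn_if k (rT la T a u)"
  by (rule sgn_if_commute[where f = "\<lambda>a. rT la T a u"]) (rule rT_neg)

lemma sgn_if_scale: "sgn_if k (sA c x) = sA c (sgn_if k x)"
  by (simp add: sgn_if_def A.scale_minus_right)

lemma dT_linear: "Vector_Spaces.linear (fscale sA) (fscale sA) (dT la ra T n)"
proof -
  interpret lT: Vector_Spaces.linear sA sA "lT ra T u" for u by (rule lT_linear)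
  interpret rT: Vector_Spaces.linear sA sA "\<lambda>a. rT la T a u" for u by (rule rT_linear)
  have "dT la ra T n (f + g) = dT la ra T n f + dT la ra T n g" for f g
    by (auto simp: fun_eq_iff dT_def lT.add rT.add sgn_if_add sum.distrib algebra_simps)
  moreover have "dT la ra T n (fscale sA c f) = fscale sA c (dT la ra T n f)" for c f
    by (auto simp: fun_eq_iff dT_def fscale_def lT.scale rT.scale sgn_if_scale
        simp flip: A.scale_right_distrib A.scale_right_diff_distrib A.scale_sum_right)
  ultimately show ?thesis
    unfolding Vector_Spaces.linear_iff using F.vector_space_axioms by blast
qed

lemma S_op_linear: "Vector_Spaces.linear (fscale sA) (fscale sA) (S_op starA starM n)"
  unfolding Vector_Spaces.linear_iff
  by (auto simp: F.vector_space_axioms fun_eq_iff S_op_def fscale_def star_A.add star_A.scale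
      sgn_if_add sgn_if_scale A.scale_minus_right)

lemma subspace_cochains: "F.subspace (cochains sA sM n)"
  unfolding F.subspace_def cochains_def multilin_def
  by (auto simp: fscale_def A.scale_right_distrib A.scale_left_commute)

lemma S_op_cochains:
  assumes f: "f \<in> cochains sA sM n"
  shows "S_op starA starM n f \<in> cochains sA sM n"
  unfolding cochains_def multilin_def
proof (intro CollectI conjI allI impI)
  fix us :: "'m list" assume "length us \<noteq> n"
  then show "S_op starA starM n f us = 0" by (simp add: S_op_def)
next
  fix us :: "'m list" and i u v c assume us: "length us = n \<and> i < n"
  let ?j = "n - i - 1"
  have rev_map_update: "rev (map starM (us[i := w])) = (rev (map starM us))[?j := starM w]" for w
    using us by (simp add: map_update rev_update)
  have "f (xs[?j := u + v]) = f (xs[?j := u]) + f (xs[?j := v])"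
    and "f (xs[?j := sM c u]) = sA c (f (xs[?j := u]))" if "length xs = n" for xs u v
    using f that us unfolding cochains_def multilin_def by auto
  then show "S_op starA starM n f (us[i := u + v])
      = S_op starA starM n f (us[i := u]) + S_op starA starM n f (us[i := v])"
    and "S_op starA starM n f (us[i := sM c u]) = sA c (S_op starA starM n f (us[i := u]))"
    using us by (auto simp: S_op_def rev_map_update star_M.add star_M.scale star_A.add star_A.scale
        sgn_if_add sgn_if_scale)
qed

lemma S_op_S_op:
  assumes "f \<in> cochains sA sM n"
  shows "S_op starA starM n (S_op starA starM n f) = f"
proof (rule ext)
  fix us :: "'m list"
  have "length us \<noteq> n \<Longrightarrow> f us = 0"
    using assms unfolding cochains_def multilin_def by blast
  then show "S_op starA starM n (S_op starA starM n f) us = f us"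
    by (auto simp: S_op_def star_A.neg starA_sgn_if sgn_if_def comp_def simp flip: rev_map)
qed

lemma merge_at_rev_map:
  assumes len: "length us = Suc n" and i: "1 \<le> i" "i \<le> n"
  shows "merge_at la ra T i (rev (map starM us)) = rev (map starM (merge_at la ra T (Suc n - i) us))"
proof -
  let ?vs = "rev (map starM us)"
  have "take (i - 1) ?vs = rev (map starM (drop (Suc n - i + 1) us))"
    using len i by (simp add: take_rev drop_map Suc_diff_le)
  moreover have "drop (i + 1) ?vs = rev (map starM (take (Suc n - i - 1) us))"
    using len i by (simp add: drop_rev take_map)
  moreover have "?vs ! (i - 1) = starM (us ! (Suc n - i))" "?vs ! i = starM (us ! (Suc n - i - 1))"
    using len i by (simp_all add: rev_nth Suc_diff_le)
  ultimately show ?thesis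
    unfolding merge_at_def by (simp add: starM_circT)
qed

(* Applying * at the reversed, conjugated arguments swaps the l_T and r_T terms of d_T
   and reverses the order of the merges; only the signs have to be matched. *)
lemma starA_dT_rev_map:
  assumes n: "0 < n" and len: "length us = Suc n"
  shows "starA (dT la ra T n f (rev (map starM us)))
       = sgn_if (Suc (n + (n - 1) * (n - 2) div 2)) (dT la ra T n (S_op starA starM n f) us)"
proof -
  define e where "e = (n - 1) * (n - 2) div 2"
  define g where "g = S_op starA starM n f"
  define vs where "vs = rev (map starM us)"
  have g_rev: "starA (f (rev (map starM xs))) = sgn_if e (g xs)" if "length xs = n" for xs
    using that n by (simp add: g_def S_op_def e_def sgn_if_sgn_if sgn_if_double)
  have len_vs: "length vs = Suc n" using len by (simp add: vs_def)
  have vs_first: "vs ! 0 = starM (us ! n)" and vs_last: "vs ! n = starM (us ! 0)"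
    using len by (simp_all add: vs_def rev_nth)
  have tl_vs: "tl vs = rev (map starM (take n us))"
  proof -
    have "tl vs = drop 1 vs" by (simp add: drop_Suc)
    also have "\<dots> = rev (take n (map starM us))" using len by (simp add: vs_def drop_rev)
    finally show ?thesis by (simp add: take_map)
  qed
  have take_vs: "take n vs = rev (map starM (tl us))"
    using len by (simp add: vs_def take_rev drop_Suc map_tl)
  define L where "L = lT ra T (us ! 0) (g (tl us))"
  define R where "R = rT la T (g (take n us)) (us ! n)"
  define X where "X j = g (merge_at la ra T j us)" for j
  have star_L: "starA (lT ra T (vs ! 0) (f (tl vs))) = sgn_if e R"
    using g_rev[of "take n us"] len by (simp add: starA_lT vs_first tl_vs R_def rT_sgn_if)
  have star_R: "starA (rT la T (f (take n vs)) (vs ! n)) = sgn_if e L"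
    using g_rev[of "tl us"] len by (simp add: starA_rT vs_last take_vs L_def lT_sgn_if)
  have star_X: "starA (\<Sum>i = 1..n. sgn_if i (f (merge_at la ra T i vs)))
      = sgn_if (Suc n + e) (\<Sum>j = 1..n. sgn_if j (X j))"
  proof -
    have "starA (\<Sum>i = 1..n. sgn_if i (f (merge_at la ra T i vs)))
        = (\<Sum>i = 1..n. sgn_if i (sgn_if e (X (Suc n - i))))"
      unfolding star_A.sum
    proof (rule sum.cong)
      fix i assume i: "i \<in> {1..n}"
      then have "length (merge_at la ra T (Suc n - i) us) = n"
        using len by (auto simp: merge_at_def)
      then show "starA (sgn_if i (f (merge_at la ra T i vs))) = sgn_if i (sgn_if e (X (Suc n - i)))"
        using i len by (simp add: vs_def merge_at_rev_map starA_sgn_if g_rev X_def)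
    qed simp
    also have "\<dots> = sgn_if e (\<Sum>i = 1..n. sgn_if i (X (Suc n - i)))"
      by (simp add: sgn_if_sum sgn_if_sgn_if add.commute)
    also have "\<dots> = sgn_if (Suc n + e) (\<Sum>j = 1..n. sgn_if j (X j))"
      unfolding sum_sgn_if_reflect by (simp add: sgn_if_sgn_if add.commute)
    finally show ?thesis .
  qed
  have "starA (dT la ra T n f vs)
      = sgn_if n (sgn_if e R + sgn_if (Suc n + e) (\<Sum>j = 1..n. sgn_if j (X j)) + sgn_if (n + 1) (sgn_if e L))"
    using len_vs n star_X by (simp add: dT_def star_A.add starA_sgn_if star_L star_R)
  moreover have "dT la ra T n g us = sgn_if n (L + (\<Sum>j = 1..n. sgn_if j (X j)) + sgn_if (n + 1) R)"
    using len n by (simp add: dT_def L_def R_def X_def)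
  ultimately show ?thesis
    unfolding vs_def g_def[symmetric] e_def[symmetric]
    by (simp add: sgn_if_add sgn_if_sgn_if) (cases "even n"; cases "even e"; simp add: sgn_if_def)
qed

lemma S_op_dT: "S_op starA starM (Suc n) (dT la ra T n f) = dT la ra T n (S_op starA starM n f)"
proof (rule ext)
  fix us :: "'m list"
  consider "length us \<noteq> Suc n" | u where "n = 0" "us = [u]" | "0 < n" "length us = Suc n"
    by (cases "length us = Suc n"; cases n) (auto simp: length_Suc_conv)
  then show "S_op starA starM (Suc n) (dT la ra T n f) us = dT la ra T n (S_op starA starM n f) us"
  proof cases
    case 1
    then show ?thesis by (simp add: S_op_def dT_def)
  next
    case 2
    then show ?thesis
      by (simp add: S_op_def dT_def star_A.diff star_A.neg starA_lT starA_rT sgn_if_def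
          lT_neg rT_neg)
  next
    case 3
    define e where "e = (n - 1) * (n - 2) div 2"
    have "S_op starA starM (Suc n) (dT la ra T n f) us
        = sgn_if (n * (n - 1) div 2) (starA (dT la ra T n f (rev (map starM us))))"
      using 3 by (simp add: S_op_def)
    also have "\<dots> = sgn_if (n * (n - 1) div 2 + Suc (n + e)) (dT la ra T n (S_op starA starM n f) us)"
      using 3 by (simp add: starA_dT_rev_map sgn_if_sgn_if e_def)
    also have "\<dots> = dT la ra T n (S_op starA starM n f) us"
    proof -
      have "even (t + Suc (n + e))" if "t = e + (n - 1)" for t
        using \<open>0 < n\<close> that by presburger
      from this[OF triangular_number_step[of n, folded e_def]] show ?thesis
        by (simp add: sgn_if_def)
    qed
    finally show ?thesis .
  qed
qed

section \<open>Splitting of the cohomology\<close>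

lemma S_op_zero [simp]: "S_op starA starM n 0 = 0"
  by (simp add: fun_eq_iff S_op_def sgn_if_def)

lemma subspace_cocycles: "F.subspace (cocycles la ra T (cochains sA sM) n)"
proof -
  interpret d: Vector_Spaces.linear "fscale sA" "fscale sA" "dT la ra T n" by (rule dT_linear)
  have "cocycles la ra T (cochains sA sM) n = cochains sA sM n \<inter> {f. dT la ra T n f = 0}"
    by (auto simp: cocycles_eq)
  then show ?thesis by (simp add: F.subspace_inter[OF subspace_cochains d.subspace_kernel])
qed

lemma S_op_cocycles:
  "S_op starA starM n ` cocycles la ra T (cochains sA sM) n \<subseteq> cocycles la ra T (cochains sA sM) n"
proof
  fix g assume "g \<in> S_op starA starM n ` cocycles la ra T (cochains sA sM) n"
  then obtain z where z: "z \<in> cochains sA sM n" "dT la ra T n z = 0" "g = S_op starA starM n z"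
    by (auto simp: cocycles_eq)
  then have "dT la ra T n g = 0" using S_op_dT[of n z] by simp
  then show "g \<in> cocycles la ra T (cochains sA sM) n"
    using z S_op_cochains by (simp add: cocycles_eq)
qed

lemma S_op_S_op_cocycles:
  "z \<in> cocycles la ra T (cochains sA sM) n \<Longrightarrow> S_op starA starM n (S_op starA starM n z) = z"
  by (simp add: cocycles_eq S_op_S_op)

lemma subspace_coboundaries: "F.subspace (coboundaries la ra T (cochains sA sM) n)"
proof (cases n)
  case (Suc k)
  interpret d: Vector_Spaces.linear "fscale sA" "fscale sA" "dT la ra T k" by (rule dT_linear)
  show ?thesis using Suc d.subspace_image[OF subspace_cochains] by (simp add: coboundaries_Suc)
qed (simp add: coboundaries_0)

lemma S_op_coboundaries:
  "S_op starA starM n ` coboundaries la ra T (cochains sA sM) n \<subseteq> coboundaries la ra T (cochains sA sM) n"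
proof (cases n)
  case (Suc k)
  have "S_op starA starM (Suc k) (dT la ra T k g) \<in> dT la ra T k ` cochains sA sM k"
    if "g \<in> cochains sA sM k" for g
    using that by (simp add: S_op_dT S_op_cochains)
  then show ?thesis using Suc by (auto simp: coboundaries_Suc)
qed (simp add: coboundaries_0)

lemma S_op_S_op_coboundaries:
  assumes "b \<in> coboundaries la ra T (cochains sA sM) n"
  shows "S_op starA starM n (S_op starA starM n b) = b"
proof (cases n)
  case (Suc k)
  then obtain g where "g \<in> cochains sA sM k" "b = dT la ra T k g"
    using assms by (auto simp: coboundaries_Suc)
  then show ?thesis using Suc by (simp add: S_op_dT S_op_cochains S_op_S_op)
qed (use assms in \<open>simp add: coboundaries_0\<close>)

lemma cocycles_icochains:
  "cocycles la ra T (icochains sA sM starA starM) n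
     = {z \<in> cocycles la ra T (cochains sA sM) n. S_op starA starM n z = z}"
  unfolding cocycles_def icochains_def by blast

lemma cocycles_imcochains:
  "cocycles la ra T (imcochains sA sM starA starM) n
     = {z \<in> cocycles la ra T (cochains sA sM) n. S_op starA starM n z = - z}"
  unfolding cocycles_def imcochains_eq by blast

lemma dT_image_eigenspaces:
  "dT la ra T k ` {f \<in> cochains sA sM k. S_op starA starM k f = f}
     = {b \<in> dT la ra T k ` cochains sA sM k. S_op starA starM (Suc k) b = b}"
  "dT la ra T k ` {f \<in> cochains sA sM k. S_op starA starM k f = - f}
     = {b \<in> dT la ra T k ` cochains sA sM k. S_op starA starM (Suc k) b = - b}"
proof -
  have stable: "S_op starA starM k ` cochains sA sM k \<subseteq> cochains sA sM k"
    by (rule image_subsetI) (rule S_op_cochains)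
  have commute: "dT la ra T k (S_op starA starM k f) = S_op starA starM (Suc k) (dT la ra T k f)" for f
    by (rule S_op_dT[symmetric])
  show "dT la ra T k ` {f \<in> cochains sA sM k. S_op starA starM k f = f}
     = {b \<in> dT la ra T k ` cochains sA sM k. S_op starA starM (Suc k) b = b}"
    by (rule linear_image_eigenspaces(1)[OF dT_linear S_op_linear subspace_cochains stable])
      (simp_all add: S_op_S_op commute)
  show "dT la ra T k ` {f \<in> cochains sA sM k. S_op starA starM k f = - f}
     = {b \<in> dT la ra T k ` cochains sA sM k. S_op starA starM (Suc k) b = - b}"
    by (rule linear_image_eigenspaces(2)[OF dT_linear S_op_linear subspace_cochains stable])
      (simp_all add: S_op_S_op commute)
qed

lemma coboundaries_icochains:
  "coboundaries la ra T (icochains sA sM starA starM) n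
     = {b \<in> coboundaries la ra T (cochains sA sM) n. S_op starA starM n b = b}"
  by (cases n) (auto simp: coboundaries_0 coboundaries_Suc icochains_def dT_image_eigenspaces)

lemma coboundaries_imcochains:
  "coboundaries la ra T (imcochains sA sM starA starM) n
     = {b \<in> coboundaries la ra T (cochains sA sM) n. S_op starA starM n b = - b}"
  by (cases n) (auto simp: coboundaries_0 coboundaries_Suc imcochains_eq dT_image_eigenspaces)

end

theorem mainTheorem5:
  fixes sA :: "'k::field_char_0 \<Rightarrow> 'a::ring \<Rightarrow> 'a"
    and sM :: "'k \<Rightarrow> 'm::ab_group_add \<Rightarrow> 'm"
    and la :: "'a \<Rightarrow> 'm \<Rightarrow> 'm" and ra :: "'m \<Rightarrow> 'a \<Rightarrow> 'm"
    and starA :: "'a \<Rightarrow> 'a" and starM :: "'m \<Rightarrow> 'm"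
    and T :: "'m \<Rightarrow> 'a"
  assumes "inv_assoc_algebra sA starA"
    and "inv_bimodule sA sM la ra starA starM"
    and "rel_RB sA sM la ra starA starM T"
  shows "\<forall>n. quot_iso_sum sA
     (cocycles la ra T (cochains sA sM) n) (coboundaries la ra T (cochains sA sM) n)
     (cocycles la ra T (icochains sA sM starA starM) n) (coboundaries la ra T (icochains sA sM starA starM) n)
     (cocycles la ra T (imcochains sA sM starA starM) n) (coboundaries la ra T (imcochains sA sM starA starM) n)"
proof
  fix n
  interpret involutive_linear_map sA sM la ra starA starM T
    using assms by (simp add: involutive_linear_map_def rel_RB_def)
  show "quot_iso_sum sA
     (cocycles la ra T (cochains sA sM) n) (coboundaries la ra T (cochains sA sM) n)
     (cocycles la ra T (icochains sA sM starA starM) n) (coboundaries la ra T (icochains sA sM starA starM) n)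
     (cocycles la ra T (imcochains sA sM starA starM) n) (coboundaries la ra T (imcochains sA sM starA starM) n)"
    unfolding cocycles_icochains cocycles_imcochains coboundaries_icochains coboundaries_imcochains
    by (rule quot_iso_sum_eigenspaces[OF A.vector_space_axioms S_op_linear
          subspace_cocycles S_op_cocycles S_op_S_op_cocycles
          subspace_coboundaries S_op_coboundaries S_op_S_op_coboundaries])
qed

end
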